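(* Let $n\ge 1$, $\mathcal{I}=\{1,\dots,n\}$, $S>0$, and $C_i>0$, $D_i>0$ for $i\in\mathcal{I}$. Put $D=\sum_{i\in\mathcal{I}}D_i$, $\tilde D_i=\min\{C_i,D_i\}$, $\tilde\beta_i=\tilde D_i/D_i$. For $\theta\ge 0$ consider the linear program $P(\theta)$: $$\max\ \sum_{i\in\mathcal{I}}\big[\beta_i-\theta(\beta-\beta_i)\big]$$ over $(\beta_1,\dots,\beta_n,\beta)\in\mathbb{R}^{n+1}$ subject to $\sum_{i\in\mathcal{I}}\beta_iD_i\le S$; $0\le\beta_i\le\tilde\beta_i$ and $\beta_i\le\beta$ for all $i$; $0\le \beta\le 1$. Let $\beta^{EQ}=\max\{b\ge 0:\ (b,\dots,b,b)\text{ is feasible for }P(\theta)\}=\max\{b\ge0: b\le\tilde\beta_i\ \forall i,\ bD\le S,\ b\le 1\}$ (the perfectly equitable fill-rate), and assume the problem is non-utopian, i.e. $\beta^{EQ}D<S$. Let $m^U=|\{i\in\mathcal{I}:\beta^{EQ}<\tilde\beta_i\}|$ be the number of unbinding variables of the equitable solution, and set $$\theta^U=\frac{m^U}{n-m^U}.$$ Then $\theta^U$ is the tightest upper bound of $\theta$ in the following sense: (a) for every $\theta\ge\theta^U$, the solution $\beta_1=\dots=\beta_n=\beta=\beta^{EQ}$ is optimal for $P(\theta)$; (b) for every $\theta$ with $0\le\theta<\theta^U$, there exists a feasible solution $(\beta_1,\dots,\beta_n,\beta)$ of $P(\theta)$ with $n\beta^{EQ}<\sum_{i\in\mathcal{I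}}\beta_i-\theta\sum_{i\in\mathcal{I}}(\beta-\beta_i)$.
   Context: This models a food-bank allocating supply $S$ (pounds of food) among $n$ agencies; agency $i$ has capacity $C_i$ and demand $D_i$, $\beta_i$ is its fill-rate (allocation divided by demand), $\beta$ is (an upper bound on) the maximum fill-rate, and $\theta\ge0$ is a penalty on deviations from the maximum fill-rate. $\tilde D_i$ is the effective demand and $\tilde\beta_i$ the maximum possible fill-rate of agency $i$. A variable $\beta_i$ is called binding if $\beta_i=\tilde\beta_i$. The objective value of the equal-fill-rate solution at level $\beta^{EQ}$ is $n\beta^{EQ}$. *)

theory Defs
  imports Complex_Main
begin

definition eff_demand :: "(nat \<Rightarrow> real) \<Rightarrow> (nat \<Rightarrow> real) \<Rightarrow> nat \<Rightarrow> real" where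
  "eff_demand C D i = min (C i) (D i)"

definition max_fill :: "(nat \<Rightarrow> real) \<Rightarrow> (nat \<Rightarrow> real) \<Rightarrow> nat \<Rightarrow> real" where
  "max_fill C D i = eff_demand C D i / D i"

definition feasible :: "nat \<Rightarrow> real \<Rightarrow> (nat \<Rightarrow> real) \<Rightarrow> (nat \<Rightarrow> real)
    \<Rightarrow> (nat \<Rightarrow> real) \<Rightarrow> real \<Rightarrow> bool" where
  "feasible n S C D bs b \<longleftrightarrow>
     (\<Sum>i\<in>{1..n}. bs i * D i) \<le> S \<and>
     (\<forall>i\<in>{1..n}. 0 \<le> bs i \<and> bs i \<le> max_fill C D i \<and> bs i \<le> b) \<and>
     0 \<le> b \<and> b \<le> 1"

definition objective :: "nat \<Rightarrow> real \<Rightarrow> (nat \<Rightarrow> real) \<Rightarrow> real \<Rightarrow> real" where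
  "objective n \<theta> bs b = (\<Sum>i\<in>{1..n}. bs i - \<theta> * (b - bs i))"

definition optimal :: "nat \<Rightarrow> real \<Rightarrow> (nat \<Rightarrow> real) \<Rightarrow> (nat \<Rightarrow> real) \<Rightarrow> real
    \<Rightarrow> (nat \<Rightarrow> real) \<Rightarrow> real \<Rightarrow> bool" where
  "optimal n S C D \<theta> bs b \<longleftrightarrow> feasible n S C D bs b \<and>
     (\<forall>bs' b'. feasible n S C D bs' b' \<longrightarrow> objective n \<theta> bs' b' \<le> objective n \<theta> bs b)"

definition beta_EQ :: "nat \<Rightarrow> real \<Rightarrow> (nat \<Rightarrow> real) \<Rightarrow> (nat \<Rightarrow> real) \<Rightarrow> real" where
  "beta_EQ n S C D = (GREATEST b. b \<ge> 0 \<and> feasible n S C D (\<lambda>_. b) b)"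

definition m_U :: "nat \<Rightarrow> real \<Rightarrow> (nat \<Rightarrow> real) \<Rightarrow> (nat \<Rightarrow> real) \<Rightarrow> nat" where
  "m_U n S C D = card {i\<in>{1..n}. beta_EQ n S C D < max_fill C D i}"

definition theta_U :: "nat \<Rightarrow> real \<Rightarrow> (nat \<Rightarrow> real) \<Rightarrow> (nat \<Rightarrow> real) \<Rightarrow> real" where
  "theta_U n S C D = real (m_U n S C D) / (real n - real (m_U n S C D))"

end

theory Submission
  imports Defs
begin

text \<open>
  For positive data, \<open>(b,\<dots>,b,b)\<close> with \<open>b \<ge> 0\<close> is feasible exactly when
  \<open>b \<le> min (min\<^sub>i \<tilde>\<beta>\<^sub>i) (S / D)\<close>. In the non-utopian case the minimum is therefore
  attained by some \<open>\<tilde>\<beta>\<^sub>i\<close>, so at least one agency binds and \<open>m\<^sup>U < n\<close>.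
  For a feasible point with ceiling \<open>\<beta> \<ge> \<beta>\<^sup>E\<^sup>Q\<close>, unbinding agencies are capped by \<open>\<beta>\<close> and
  binding ones by \<open>\<beta>\<^sup>E\<^sup>Q\<close>, so the objective is at most
  \<open>n \<beta>\<^sup>E\<^sup>Q + (\<beta> - \<beta>\<^sup>E\<^sup>Q) (m\<^sup>U - \<theta> (n - m\<^sup>U))\<close>; raising \<open>\<beta>\<close> and the unbinding fill-rates
  by a small \<open>\<epsilon>\<close> attains this bound. Hence the sign of \<open>m\<^sup>U - \<theta> (n - m\<^sup>U)\<close>, i.e. of
  \<open>\<theta>\<^sup>U - \<theta>\<close>, decides whether the equitable solution is optimal.
\<close>

lemma finite_strict_bounds_margin:
  fixes f :: "'a \<Rightarrow> real"
  assumes "finite A" "\<And>x. x \<in> A \<Longrightarrow> a < f x"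
  obtains \<epsilon> where "0 < \<epsilon>" "\<And>x. x \<in> A \<Longrightarrow> a + \<epsilon> \<le> f x"
proof
  let ?\<epsilon> = "Min (insert 1 ((\<lambda>x. f x - a) ` A))"
  show "0 < ?\<epsilon>"
    using assms by simp
  show "a + ?\<epsilon> \<le> f x" if "x \<in> A" for x
  proof -
    have "?\<epsilon> \<le> f x - a"
      using assms(1) that by (intro Min_le) auto
    then show ?thesis by simp
  qed
qed

lemma sum_if_mem_subset:
  fixes x y :: "'a::semiring_1"
  assumes "finite A" "U \<subseteq> A"
  shows "(\<Sum>i\<in>A. if i \<in> U then x else y) = of_nat (card U) * x + of_nat (card A - card U) * y"
proof -
  have "A \<inter> {i. i \<in> U} = U" "A \<inter> - {i. i \<in> U} = A - U"
    using assms(2) by auto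
  then show ?thesis
    using assms by (simp add: sum.If_cases card_Diff_subset finite_subset)
qed

lemma sum_level_plus_if_mem:
  fixes \<beta> t \<theta> :: real
  assumes "U \<subseteq> {1..n}"
  shows "(\<Sum>i\<in>{1..n}. \<beta> + t * (if i \<in> U then 1 else - \<theta>))
           = real n * \<beta> + t * (real (card U) - \<theta> * (real n - real (card U)))"
proof -
  have "card U \<le> n"
    using card_mono[OF _ assms] by simp
  moreover have "(\<Sum>i\<in>{1..n}. if i \<in> U then 1 else - \<theta>) = real (card U) - \<theta> * real (n - card U)"
    using sum_if_mem_subset[OF _ assms, of 1 "- \<theta>"] by simp
  ultimately show ?thesis
    by (simp add: sum.distrib sum_distrib_left[symmetric] of_nat_diff)
qed

lemma max_fill_le_1: "D i > 0 \<Longrightarrow> max_fill C D i \<le> 1"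
  by (simp add: max_fill_def eff_demand_def)

lemma max_fill_pos: "C i > 0 \<Longrightarrow> D i > 0 \<Longrightarrow> max_fill C D i > 0"
  by (simp add: max_fill_def eff_demand_def)

lemma objective_eq: "objective n \<theta> bs b = (\<Sum>i\<in>{1..n}. bs i) - \<theta> * (\<Sum>i\<in>{1..n}. b - bs i)"
  unfolding objective_def by (simp add: sum_subtractf flip: sum_distrib_left)

lemma objective_const: "objective n \<theta> (\<lambda>_. b) b = real n * b"
  by (simp add: objective_def)

lemma objective_le_equitable:
  assumes feas: "feasible n S C D bs b" and "0 \<le> \<theta>" and "U \<subseteq> {1..n}"
    and binding: "\<And>i. i \<in> {1..n} - U \<Longrightarrow> max_fill C D i \<le> \<beta>"
    and penalty: "real (card U) \<le> \<theta> * (real n - real (card U))"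
  shows "objective n \<theta> bs b \<le> real n * \<beta>"
proof (cases "b \<le> \<beta>")
  case True
  have "objective n \<theta> bs b \<le> (\<Sum>i\<in>{1..n}. \<beta>)"
    unfolding objective_def
  proof (rule sum_mono)
    fix i assume "i \<in> {1..n}"
    then have "bs i \<le> b" using feas by (simp add: feasible_def)
    then have "0 \<le> \<theta> * (b - bs i)" using \<open>0 \<le> \<theta>\<close> by simp
    then show "bs i - \<theta> * (b - bs i) \<le> \<beta>"
      using \<open>bs i \<le> b\<close> True by linarith
  qed
  then show ?thesis by simp
next
  case False
  have "objective n \<theta> bs b \<le> (\<Sum>i\<in>{1..n}. \<beta> + (b - \<beta>) * (if i \<in> U then 1 else - \<theta>))"
    unfolding objective_def
  proof (rule sum_mono)
    fix i assume i: "i \<in> {1..n}"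
    then have "bs i \<le> b" "bs i \<le> max_fill C D i" using feas by (auto simp: feasible_def)
    show "bs i - \<theta> * (b - bs i) \<le> \<beta> + (b - \<beta>) * (if i \<in> U then 1 else - \<theta>)"
    proof (cases "i \<in> U")
      case True
      have "0 \<le> \<theta> * (b - bs i)" using \<open>0 \<le> \<theta>\<close> \<open>bs i \<le> b\<close> by simp
      then have "bs i - \<theta> * (b - bs i) \<le> b" using \<open>bs i \<le> b\<close> by linarith
      with True show ?thesis by simp
    next
      case False
      then have "bs i \<le> \<beta>"
        using binding i \<open>bs i \<le> max_fill C D i\<close> by fastforce
      then have "(1 + \<theta>) * bs i \<le> (1 + \<theta>) * \<beta>"
        using \<open>0 \<le> \<theta>\<close> by (intro mult_left_mono) auto
      with False show ?thesis by (simp add: algebra_simps)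
    qed
  qed
  also have "\<dots> = real n * \<beta> + (b - \<beta>) * (real (card U) - \<theta> * (real n - real (card U)))"
    using sum_level_plus_if_mem[OF \<open>U \<subseteq> {1..n}\<close>] .
  also have "\<dots> \<le> real n * \<beta>"
    using False penalty by (simp add: mult_nonneg_nonpos)
  finally show ?thesis .
qed

lemma feasible_raise:
  assumes "0 \<le> \<beta>" "0 \<le> \<epsilon>" and D_nonneg: "\<And>i. i \<in> {1..n} \<Longrightarrow> 0 \<le> D i"
    and total_supply: "(\<beta> + \<epsilon>) * (\<Sum>i\<in>{1..n}. D i) \<le> S"
    and "\<And>i. i \<in> {1..n} \<Longrightarrow> \<beta> \<le> max_fill C D i"
    and "\<And>i. i \<in> U \<Longrightarrow> \<beta> + \<epsilon> \<le> max_fill C D i"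
    and "\<beta> + \<epsilon> \<le> 1"
  shows "feasible n S C D (\<lambda>i. \<beta> + (if i \<in> U then \<epsilon> else 0)) (\<beta> + \<epsilon>)"
proof -
  have "(\<Sum>i\<in>{1..n}. (\<beta> + (if i \<in> U then \<epsilon> else 0)) * D i) \<le> (\<Sum>i\<in>{1..n}. (\<beta> + \<epsilon>) * D i)"
    using D_nonneg \<open>0 \<le> \<epsilon>\<close> by (intro sum_mono mult_right_mono) auto
  also have "\<dots> \<le> S"
    using total_supply by (simp add: sum_distrib_left)
  finally show ?thesis
    using assms unfolding feasible_def by auto
qed

lemma objective_raise:
  assumes "U \<subseteq> {1..n}"
  shows "objective n \<theta> (\<lambda>i. \<beta> + (if i \<in> U then \<epsilon> else 0)) (\<beta> + \<epsilon>)
           = real n * \<beta> + \<epsilon> * (real (card U) - \<theta> * (real n - real (card U)))"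
  unfolding objective_def sum_level_plus_if_mem[OF assms, symmetric]
  by (intro sum.cong) (auto simp: algebra_simps)

lemma feasible_const_iff:
  "feasible n S C D (\<lambda>_. b) b \<longleftrightarrow>
     b * (\<Sum>i\<in>{1..n}. D i) \<le> S \<and> (\<forall>i\<in>{1..n}. b \<le> max_fill C D i) \<and> 0 \<le> b \<and> b \<le> 1"
  unfolding feasible_def by (simp add: sum_distrib_left) blast

definition unbinding :: "nat \<Rightarrow> real \<Rightarrow> (nat \<Rightarrow> real) \<Rightarrow> (nat \<Rightarrow> real) \<Rightarrow> nat set" where
  "unbinding n S C D = {i \<in> {1..n}. beta_EQ n S C D < max_fill C D i}"

lemma unbinding_subset: "unbinding n S C D \<subseteq> {1..n}"
  by (auto simp: unbinding_def)

lemma theta_U_eq: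
  "theta_U n S C D = real (card (unbinding n S C D)) / (real n - real (card (unbinding n S C D)))"
  by (simp add: theta_U_def m_U_def unbinding_def)

context
  fixes n :: nat and S :: real and C D :: "nat \<Rightarrow> real"
  assumes n_pos: "n \<ge> 1" and S_nonneg: "S \<ge> 0"
    and C_pos: "\<And>i. i \<in> {1..n} \<Longrightarrow> C i > 0" and D_pos: "\<And>i. i \<in> {1..n} \<Longrightarrow> D i > 0"
begin

lemma demand_total_pos: "0 < (\<Sum>i\<in>{1..n}. D i)"
  using n_pos D_pos by (intro sum_pos) auto

lemma feasible_const_iff_le_equitable_bound:
  assumes "0 \<le> b"
  shows "feasible n S C D (\<lambda>_. b) b \<longleftrightarrow>
           b \<le> min (Min (max_fill C D ` {1..n})) (S / (\<Sum>i\<in>{1..n}. D i))"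
proof -
  have "1 \<in> {1..n}" using n_pos by simp
  have fill_iff: "(\<forall>i\<in>{1..n}. b \<le> max_fill C D i) \<longleftrightarrow> b \<le> Min (max_fill C D ` {1..n})"
    using \<open>1 \<in> {1..n}\<close> by (auto simp: Min_ge_iff)
  have supply_iff: "b * (\<Sum>i\<in>{1..n}. D i) \<le> S \<longleftrightarrow> b \<le> S / (\<Sum>i\<in>{1..n}. D i)"
    using demand_total_pos by (simp add: pos_le_divide_eq)
  have "b \<le> 1" if "b \<le> Min (max_fill C D ` {1..n})"
  proof -
    have "b \<le> max_fill C D 1"
      using that fill_iff \<open>1 \<in> {1..n}\<close> by blast
    also have "\<dots> \<le> 1"
      using D_pos[OF \<open>1 \<in> {1..n}\<close>] by (rule max_fill_le_1)
    finally show ?thesis .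
  qed
  then show ?thesis
    unfolding feasible_const_iff fill_iff supply_iff min.bounded_iff using \<open>0 \<le> b\<close> by blast
qed

lemma equitable_bound_nonneg: "0 \<le> min (Min (max_fill C D ` {1..n})) (S / (\<Sum>i\<in>{1..n}. D i))"
proof -
  have "\<forall>i\<in>{1..n}. 0 \<le> max_fill C D i"
    using max_fill_pos C_pos D_pos less_imp_le by blast
  then have "0 \<le> Min (max_fill C D ` {1..n})"
    using n_pos by (simp add: Min_ge_iff)
  moreover have "0 \<le> S / (\<Sum>i\<in>{1..n}. D i)"
    using D_pos by (intro divide_nonneg_nonneg S_nonneg sum_nonneg) (simp add: less_imp_le)
  ultimately show ?thesis by simp
qed

lemma beta_EQ_eq: "beta_EQ n S C D = min (Min (max_fill C D ` {1..n})) (S / (\<Sum>i\<in>{1..n}. D i))"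
  (is "_ = ?g")
  unfolding beta_EQ_def
proof (rule Greatest_equality)
  show "0 \<le> ?g \<and> feasible n S C D (\<lambda>_. ?g) ?g"
    using equitable_bound_nonneg feasible_const_iff_le_equitable_bound[OF equitable_bound_nonneg] by simp
  show "b \<le> ?g" if "0 \<le> b \<and> feasible n S C D (\<lambda>_. b) b" for b
    using that feasible_const_iff_le_equitable_bound[of b] by simp
qed

lemma beta_EQ_feasible:
  "0 \<le> beta_EQ n S C D \<and> feasible n S C D (\<lambda>_. beta_EQ n S C D) (beta_EQ n S C D)"
  unfolding beta_EQ_eq
  using equitable_bound_nonneg feasible_const_iff_le_equitable_bound[OF equitable_bound_nonneg] by simp

context
  assumes nonutopian: "beta_EQ n S C D * (\<Sum>i\<in>{1..n}. D i) < S"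
begin

lemma card_unbinding_less: "card (unbinding n S C D) < n"
proof -
  have "beta_EQ n S C D = Min (max_fill C D ` {1..n})"
    using nonutopian demand_total_pos
    by (simp add: beta_EQ_eq pos_less_divide_eq min_def split: if_splits)
  moreover have "Min (max_fill C D ` {1..n}) \<in> max_fill C D ` {1..n}"
    using n_pos by (intro Min_in) auto
  ultimately obtain i where "i \<in> {1..n}" "i \<notin> unbinding n S C D"
    by (force simp: unbinding_def)
  then have "unbinding n S C D \<subset> {1..n}"
    using unbinding_subset by blast
  then show ?thesis
    using psubset_card_mono[of "{1..n}"] by simp
qed

lemma equitable_optimal:
  assumes "theta_U n S C D \<le> \<theta>"
  shows "optimal n S C D \<theta> (\<lambda>_. beta_EQ n S C D) (beta_EQ n S C D)"
proof -
  let ?U = "unbinding n S C D"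
  have "0 < real n - real (card ?U)"
    using card_unbinding_less by simp
  then have "0 \<le> theta_U n S C D"
    unfolding theta_U_eq by simp
  with assms have "0 \<le> \<theta>" by linarith
  have penalty: "real (card ?U) \<le> \<theta> * (real n - real (card ?U))"
    using assms \<open>0 < real n - real (card ?U)\<close> unfolding theta_U_eq by (simp add: pos_divide_le_eq)
  have binding: "max_fill C D i \<le> beta_EQ n S C D" if "i \<in> {1..n} - ?U" for i
    using that by (auto simp: unbinding_def)
  show ?thesis
    using objective_le_equitable[OF _ \<open>0 \<le> \<theta>\<close> unbinding_subset binding penalty] beta_EQ_feasible
    by (auto simp: optimal_def objective_const)
qed

lemma raise_margin_exists:
  obtains \<epsilon> where "0 < \<epsilon>" "(beta_EQ n S C D + \<epsilon>) * (\<Sum>i\<in>{1..n}. D i) \<le> S"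
    "\<And>i. i \<in> unbinding n S C D \<Longrightarrow> beta_EQ n S C D + \<epsilon> \<le> max_fill C D i"
proof -
  let ?\<beta> = "beta_EQ n S C D"
  have "finite (unbinding n S C D)" "\<And>i. i \<in> unbinding n S C D \<Longrightarrow> ?\<beta> < max_fill C D i"
    by (simp_all add: unbinding_def)
  then obtain \<epsilon>\<^sub>0 where "0 < \<epsilon>\<^sub>0" and \<epsilon>\<^sub>0: "\<And>i. i \<in> unbinding n S C D \<Longrightarrow> ?\<beta> + \<epsilon>\<^sub>0 \<le> max_fill C D i"
    using finite_strict_bounds_margin by metis
  let ?\<epsilon> = "min \<epsilon>\<^sub>0 (S / (\<Sum>i\<in>{1..n}. D i) - ?\<beta>)"
  show thesis
  proof
    show "0 < ?\<epsilon>"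
      using \<open>0 < \<epsilon>\<^sub>0\<close> nonutopian demand_total_pos by (simp add: pos_less_divide_eq)
    show "(?\<beta> + ?\<epsilon>) * (\<Sum>i\<in>{1..n}. D i) \<le> S"
      using demand_total_pos by (simp flip: pos_le_divide_eq)
    show "?\<beta> + ?\<epsilon> \<le> max_fill C D i" if "i \<in> unbinding n S C D" for i
      using \<epsilon>\<^sub>0[OF that] by linarith
  qed
qed

lemma equitable_improvable:
  assumes "0 \<le> \<theta>" "\<theta> < theta_U n S C D"
  shows "\<exists>bs b. feasible n S C D bs b \<and> real n * beta_EQ n S C D < objective n \<theta> bs b"
proof -
  let ?\<beta> = "beta_EQ n S C D" and ?U = "unbinding n S C D"
  have "0 < real n - real (card ?U)"
    using card_unbinding_less by simp
  then have gain: "0 < real (card ?U) - \<theta> * (real n - real (card ?U))"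
    using assms unfolding theta_U_eq by (simp add: pos_less_divide_eq)
  moreover have "0 \<le> \<theta> * (real n - real (card ?U))"
    using assms(1) \<open>0 < real n - real (card ?U)\<close> by simp
  ultimately have "?U \<noteq> {}" by auto
  then obtain j where "j \<in> ?U" by blast
  obtain \<epsilon> where "0 < \<epsilon>" and total_supply: "(?\<beta> + \<epsilon>) * (\<Sum>i\<in>{1..n}. D i) \<le> S"
    and \<epsilon>: "\<And>i. i \<in> ?U \<Longrightarrow> ?\<beta> + \<epsilon> \<le> max_fill C D i"
    using raise_margin_exists by blast
  have "j \<in> {1..n}"
    using \<open>j \<in> ?U\<close> unbinding_subset by blast
  then have "max_fill C D j \<le> 1"
    using D_pos max_fill_le_1 by blast
  with \<epsilon>[OF \<open>j \<in> ?U\<close>] have "?\<beta> + \<epsilon> \<le> 1"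
    by linarith
  moreover have "?\<beta> \<le> max_fill C D i" if "i \<in> {1..n}" for i
    using beta_EQ_feasible that by (simp add: feasible_def)
  moreover have "0 \<le> D i" if "i \<in> {1..n}" for i
    using D_pos[OF that] by simp
  ultimately have "feasible n S C D (\<lambda>i. ?\<beta> + (if i \<in> ?U then \<epsilon> else 0)) (?\<beta> + \<epsilon>)"
    using feasible_raise[OF _ _ _ total_supply _ \<epsilon>] beta_EQ_feasible \<open>0 < \<epsilon>\<close> by simp
  moreover have "real n * ?\<beta> < objective n \<theta> (\<lambda>i. ?\<beta> + (if i \<in> ?U then \<epsilon> else 0)) (?\<beta> + \<epsilon>)"
    using \<open>0 < \<epsilon>\<close> gain by (simp add: objective_raise[OF unbinding_subset])
  ultimately show ?thesis
    by (intro exI conjI)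
qed

end

end

theorem theorem1:
  fixes n :: nat and S :: real and C D :: "nat \<Rightarrow> real"
  assumes "n \<ge> 1" and "S > 0"
    and "\<And>i. i \<in> {1..n} \<Longrightarrow> C i > 0"
    and "\<And>i. i \<in> {1..n} \<Longrightarrow> D i > 0"
    and nonutopian: "beta_EQ n S C D * (\<Sum>i\<in>{1..n}. D i) < S"
  shows "(\<forall>\<theta>. \<theta> \<ge> theta_U n S C D \<longrightarrow>
            optimal n S C D \<theta> (\<lambda>_. beta_EQ n S C D) (beta_EQ n S C D))
       \<and> (\<forall>\<theta>. 0 \<le> \<theta> \<and> \<theta> < theta_U n S C D \<longrightarrow>
            (\<exists>bs b. feasible n S C D bs b \<and>
               real n * beta_EQ n S C D <
                 (\<Sum>i\<in>{1..n}. bs i) - \<theta> * (\<Sum>i\<in>{1..n}. b - bs i)))"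
proof -
  have "S \<ge> 0" using \<open>S > 0\<close> by simp
  note optimal = equitable_optimal[OF assms(1) this assms(3,4) nonutopian]
  note improvable = equitable_improvable[OF assms(1) \<open>S \<ge> 0\<close> assms(3,4) nonutopian]
  show ?thesis
    unfolding objective_eq[symmetric] using optimal improvable by auto
qed
end
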